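(* Let $V$ and $W$ be subsets of normed spaces over $\mathbb{R}$ or $\mathbb{C}$ with $V$ compact, and let $T:V\to W$ be continuous. (1) There exists a pseudo-inverse $S:W\to V$ of $T$. (2) If moreover $W$ is a Hilbert space, $T$ is injective and $T(V)$ is convex, then $S:=T^{-1}\circ P_{T(V)}:W\to V$, where $P_{T(V)}$ is the metric projection onto $T(V)$ and $T^{-1}:T(V)\to V$ is the inverse of $T$ on its image, is continuous and is the unique pseudo-inverse of $T$ defined on $W$.
   Context: Let $V,W$ be subsets of normed spaces over $\mathbb{R}$ or $\mathbb{C}$ and $T:V\to W$. An operator $S:W\to V$ is a pseudo-inverse of $T$ if: (BAS) for every $w\in W$, the minimum $m_w=\min_{v\in V}\|T(v)-w\|$ is attained, the norm attains its minimum on $\{v\in V:\|T(v)-w\|=m_w\}$, and $S(w)\in\arg\min\{\|v\|:v\in V,\ \|T(v)-w\|=m_w\}$; and (MP2) $S\circ T\circ S=S$. The metric projection onto a nonempty closed convex subset of a Hilbert space maps each point to its unique nearest point in the set. *)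

theory Defs
  imports "HOL-Analysis.Analysis"
begin

definition pseudo_inverse ::
  "'a::real_normed_vector set \<Rightarrow> 'b::real_normed_vector set \<Rightarrow> ('a \<Rightarrow> 'b) \<Rightarrow> ('b \<Rightarrow> 'a) \<Rightarrow> bool"
where
  "pseudo_inverse V W T S \<longleftrightarrow>
     (\<forall>w\<in>W.
        (\<exists>v0\<in>V. \<forall>v\<in>V. norm (T v0 - w) \<le> norm (T v - w)) \<and>
        (let m = Inf ((\<lambda>v. norm (T v - w)) ` V);
             M = {v\<in>V. norm (T v - w) = m}
         in (\<exists>u\<in>M. \<forall>v\<in>M. norm u \<le> norm v) \<and>
            S w \<in> M \<and> (\<forall>v\<in>M. norm (S w) \<le> norm v))) \<and>
     (\<forall>w\<in>W. S (T (S w)) = S w)"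

definition metric_projection :: "'b::real_normed_vector set \<Rightarrow> 'b \<Rightarrow> 'b" where
  "metric_projection C w = (THE p. p \<in> C \<and> (\<forall>y\<in>C. norm (w - p) \<le> norm (w - y)))"

end

theory Submission
  imports Defs
begin

text \<open>On a compact set every continuous function attains its infimum, so best approximations exist
  and form a compact set, on which the norm attains its minimum. For (1), choose a least-norm best
  approximation \<open>u\<close> of \<open>w\<close> and then replace it by a least-norm preimage of \<open>T u\<close>: the value then
  depends only on \<open>T u\<close>, which makes \<open>S \<circ> T \<circ> S = S\<close> hold. For (2), the nearest point of \<open>T(V)\<close>
  to \<open>w\<close> is unique and \<open>T\<close> is injective, so \<open>w\<close> has exactly one best approximation and (BAS)
  already determines \<open>S\<close>; continuity follows because the metric projection onto a convex set in
  an inner product space is nonexpansive and the inverse of a continuous injection on a compact set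
  is continuous.\<close>

definition best_approximations ::
  "'a::real_normed_vector set \<Rightarrow> ('a \<Rightarrow> 'b::real_normed_vector) \<Rightarrow> 'b \<Rightarrow> 'a set" where
  "best_approximations V T w = {v\<in>V. \<forall>u\<in>V. norm (T v - w) \<le> norm (T u - w)}"

definition min_norm_point :: "'a::real_normed_vector set \<Rightarrow> 'a" where
  "min_norm_point K = (SOME u. u \<in> K \<and> (\<forall>v\<in>K. norm u \<le> norm v))"

lemma compact_level_set:
  fixes f :: "'a::metric_space \<Rightarrow> 'b::t1_space"
  assumes "compact K" "continuous_on K f"
  shows "compact {x\<in>K. f x = c}"
proof -
  have "closed {x\<in>K. f x = c}"
    using continuous_closed_preimage_constant[OF assms(2) compact_imp_closed[OF assms(1)]] .
  then have "compact (K \<inter> {x\<in>K. f x = c})"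
    by (rule compact_Int_closed[OF assms(1)])
  then show ?thesis by (simp add: Int_absorb1 subset_eq)
qed

lemma min_norm_point:
  assumes "compact K" "K \<noteq> {}"
  shows "min_norm_point K \<in> K" "\<forall>v\<in>K. norm (min_norm_point K) \<le> norm v"
proof -
  have "\<exists>u. u \<in> K \<and> (\<forall>v\<in>K. norm u \<le> norm v)"
    using continuous_attains_inf[OF assms continuous_on_norm[OF continuous_on_id]] by auto
  then have "min_norm_point K \<in> K \<and> (\<forall>v\<in>K. norm (min_norm_point K) \<le> norm v)"
    unfolding min_norm_point_def by (rule someI_ex)
  then show "min_norm_point K \<in> K" "\<forall>v\<in>K. norm (min_norm_point K) \<le> norm v" by auto
qed

lemma best_approximations_eq_Inf_level_set:
  assumes "compact V" "V \<noteq> {}" "continuous_on V T"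
  shows "best_approximations V T w = {v\<in>V. norm (T v - w) = Inf ((\<lambda>v. norm (T v - w)) ` V)}"
    and "best_approximations V T w \<noteq> {}"
proof -
  have cont: "continuous_on V (\<lambda>v. norm (T v - w))"
    by (intro continuous_intros assms(3))
  obtain v0 where v0: "v0 \<in> V" "\<forall>v\<in>V. norm (T v0 - w) \<le> norm (T v - w)"
    using continuous_attains_inf[OF assms(1,2) cont] by blast
  have "Inf ((\<lambda>v. norm (T v - w)) ` V) = norm (T v0 - w)"
    by (rule cInf_eq_minimum) (use v0 in auto)
  then show "best_approximations V T w = {v\<in>V. norm (T v - w) = Inf ((\<lambda>v. norm (T v - w)) ` V)}"
    unfolding best_approximations_def using v0 by (auto intro: antisym)
  show "best_approximations V T w \<noteq> {}"
    unfolding best_approximations_def using v0 by blast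
qed

lemma compact_best_approximations:
  assumes "compact V" "V \<noteq> {}" "continuous_on V T"
  shows "compact (best_approximations V T w)"
  unfolding best_approximations_eq_Inf_level_set(1)[OF assms]
  by (rule compact_level_set[OF assms(1)]) (intro continuous_intros assms(3))

lemma best_approximations_of_image:
  assumes "y \<in> T ` V"
  shows "best_approximations V T y = {v\<in>V. T v = y}"
  using assms unfolding best_approximations_def by force

lemma pseudo_inverse_iff:
  assumes "compact V" "V \<noteq> {}" "continuous_on V T"
  shows "pseudo_inverse V W T S \<longleftrightarrow>
    (\<forall>w\<in>W. S w \<in> best_approximations V T w \<and>
            (\<forall>v\<in>best_approximations V T w. norm (S w) \<le> norm v) \<and>
            S (T (S w)) = S w)"
proof -
  have "\<exists>v0\<in>V. \<forall>v\<in>V. norm (T v0 - w) \<le> norm (T v - w)" for w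
    using best_approximations_eq_Inf_level_set(2)[OF assms] unfolding best_approximations_def
    by blast
  moreover have "\<exists>u\<in>best_approximations V T w. \<forall>v\<in>best_approximations V T w. norm u \<le> norm v"
    for w using min_norm_point[OF compact_best_approximations[OF assms]
        best_approximations_eq_Inf_level_set(2)[OF assms]] by blast
  ultimately show ?thesis
    unfolding pseudo_inverse_def Let_def best_approximations_eq_Inf_level_set(1)[OF assms, symmetric]
    by blast
qed

lemma pseudo_inverse_exists:
  assumes "compact V" "V \<noteq> {}" "continuous_on V T"
  shows "\<exists>S. pseudo_inverse V W T S"
proof -
  define B where "B = best_approximations V T"
  define F where "F y = {v\<in>V. T v = y}" for y
  define S where "S w = min_norm_point (F (T (min_norm_point (B w))))" for w
  have B: "min_norm_point (B w) \<in> B w" "\<forall>v\<in>B w. norm (min_norm_point (B w)) \<le> norm v" for w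
    using min_norm_point[OF compact_best_approximations[OF assms]
        best_approximations_eq_Inf_level_set(2)[OF assms]] unfolding B_def by auto
  have F: "min_norm_point (F y) \<in> F y" "\<forall>v\<in>F y. norm (min_norm_point (F y)) \<le> norm v"
    if "y \<in> T ` V" for y
    using min_norm_point[of "F y"] compact_level_set[OF assms(1,3)] that unfolding F_def by auto
  have "S w \<in> B w \<and> (\<forall>v\<in>B w. norm (S w) \<le> norm v) \<and> S (T (S w)) = S w" for w
  proof -
    let ?u = "min_norm_point (B w)"
    have u: "?u \<in> V" using B(1) unfolding B_def best_approximations_def by blast
    have Sw: "S w \<in> V" "T (S w) = T ?u" "norm (S w) \<le> norm ?u"
      using F[of "T ?u"] u unfolding S_def F_def by auto
    have "S w \<in> B w" using B(1) Sw(1,2) unfolding B_def best_approximations_def by simp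
    moreover have "\<forall>v\<in>B w. norm (S w) \<le> norm v" using B(2) Sw(3) by force
    moreover have "S (T (S w)) = S w"
    proof -
      have "B (T ?u) = F (T ?u)"
        unfolding F_def using u by (auto simp: B_def intro!: best_approximations_of_image)
      then have "T (min_norm_point (B (T ?u))) = T ?u"
        using F(1)[of "T ?u"] u unfolding F_def by auto
      then show ?thesis unfolding Sw(2) by (simp add: S_def)
    qed
    ultimately show ?thesis by blast
  qed
  then have "pseudo_inverse V W T S"
    unfolding pseudo_inverse_iff[OF assms] B_def by blast
  then show ?thesis by blast
qed

lemma metric_projection_unique:
  fixes C :: "'a::real_inner set"
  assumes "convex C" "closed C" "p \<in> C" "\<forall>y\<in>C. norm (w - p) \<le> norm (w - y)"
  shows "metric_projection C w = p"
  unfolding metric_projection_def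
proof (rule the1_equality)
  show "\<exists>!p. p \<in> C \<and> (\<forall>y\<in>C. norm (w - p) \<le> norm (w - y))"
    using assms any_closest_point_unique[OF assms(1,2)] by (auto simp: dist_norm)
qed (use assms in auto)

lemma metric_projection:
  fixes C :: "'a::real_inner set"
  assumes "compact C" "C \<noteq> {}" "convex C"
  shows "metric_projection C w \<in> C" "\<forall>y\<in>C. norm (w - metric_projection C w) \<le> norm (w - y)"
proof -
  have "continuous_on C (\<lambda>p. norm (w - p))" by (intro continuous_intros)
  then obtain p where p: "p \<in> C" "\<forall>y\<in>C. norm (w - p) \<le> norm (w - y)"
    using continuous_attains_inf[OF assms(1,2)] by blast
  moreover have "metric_projection C w = p"
    by (rule metric_projection_unique[OF assms(3) compact_imp_closed[OF assms(1)] p])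
  ultimately show "metric_projection C w \<in> C"
    "\<forall>y\<in>C. norm (w - metric_projection C w) \<le> norm (w - y)" by auto
qed

lemma metric_projection_nonexpansive:
  fixes C :: "'a::real_inner set"
  assumes "compact C" "C \<noteq> {}" "convex C"
  shows "dist (metric_projection C x) (metric_projection C y) \<le> dist x y"
proof -
  let ?P = "metric_projection C"
  have obtuse: "inner (a - ?P a) (?P b - ?P a) \<le> 0" for a b
    by (rule any_closest_point_dot[OF assms(3) compact_imp_closed[OF assms(1)]])
       (use metric_projection[OF assms] in \<open>auto simp: dist_norm\<close>)
  show ?thesis unfolding dist_norm norm_le
    using obtuse[of x y] obtuse[of y x] inner_ge_zero[of "(x - ?P x) - (y - ?P y)"]
    by (simp add: inner_add inner_diff inner_commute)
qed

lemma continuous_on_metric_projection: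
  fixes C :: "'a::real_inner set"
  assumes "compact C" "C \<noteq> {}" "convex C"
  shows "continuous_on UNIV (metric_projection C)"
  unfolding continuous_on_iff using le_less_trans[OF metric_projection_nonexpansive[OF assms]]
  by blast

lemma pseudo_inverse_iff_inv_comp_metric_projection:
  fixes T :: "'a::real_normed_vector \<Rightarrow> 'b::real_inner"
  assumes "compact V" "V \<noteq> {}" "continuous_on V T" "inj_on T V" "convex (T ` V)"
  shows "pseudo_inverse V UNIV T S \<longleftrightarrow> S = the_inv_into V T \<circ> metric_projection (T ` V)"
proof -
  let ?P = "metric_projection (T ` V)"
  let ?S = "the_inv_into V T \<circ> ?P"
  have C: "compact (T ` V)" "T ` V \<noteq> {}" "convex (T ` V)"
    using assms compact_continuous_image by auto
  have S: "?S w \<in> V" "T (?S w) = ?P w" for w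
    using metric_projection(1)[OF C] the_inv_into_into[OF assms(4)] f_the_inv_into_f[OF assms(4)]
    by auto
  have "best_approximations V T w = {?S w}" for w
  proof -
    have "v = ?S w" if "v \<in> best_approximations V T w" for v
    proof -
      have v: "v \<in> V" "\<forall>y\<in>T ` V. norm (w - T v) \<le> norm (w - y)"
        using that unfolding best_approximations_def by (auto simp: norm_minus_commute)
      then have "?P w = T v"
        using metric_projection_unique[OF C(3) compact_imp_closed[OF C(1)]] by blast
      then show "v = ?S w" using the_inv_into_f_f[OF assms(4) v(1)] by simp
    qed
    moreover have "?S w \<in> best_approximations V T w"
      using S metric_projection(2)[OF C, of w]
      unfolding best_approximations_def by (auto simp: norm_minus_commute)
    ultimately show ?thesis by blast
  qed
  moreover have "?P (?P w) = ?P w" for w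
    by (rule metric_projection_unique[OF C(3) compact_imp_closed[OF C(1)] metric_projection(1)[OF C]])
       simp
  then have "?S (T (?S w)) = ?S w" for w
    by (metis S(2) comp_apply)
  ultimately show ?thesis
    unfolding pseudo_inverse_iff[OF assms(1-3)] by auto
qed

theorem mainTheorem7:
  fixes V :: "'a::real_normed_vector set" and W :: "'b::real_normed_vector set"
    and T :: "'a \<Rightarrow> 'b"
    and V2 :: "'c::real_normed_vector set"
    and T2 :: "'c \<Rightarrow> 'd::{real_inner,complete_space}"
  shows "((compact V \<and> V \<noteq> {} \<and> continuous_on V T \<and> T ` V \<subseteq> W)
            \<longrightarrow> (\<exists>S. pseudo_inverse V W T S))
       \<and> ((compact V2 \<and> V2 \<noteq> {} \<and> continuous_on V2 T2 \<and> inj_on T2 V2 \<and> convex (T2 ` V2))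
            \<longrightarrow> (let S = the_inv_into V2 T2 \<circ> metric_projection (T2 ` V2)
                 in continuous_on UNIV S \<and> pseudo_inverse V2 UNIV T2 S \<and>
                    (\<forall>S'. pseudo_inverse V2 UNIV T2 S' \<longrightarrow> S' = S)))"
proof (intro conjI impI)
  assume "compact V \<and> V \<noteq> {} \<and> continuous_on V T \<and> T ` V \<subseteq> W"
  then show "\<exists>S. pseudo_inverse V W T S" using pseudo_inverse_exists by blast
next
  assume assms: "compact V2 \<and> V2 \<noteq> {} \<and> continuous_on V2 T2 \<and> inj_on T2 V2 \<and> convex (T2 ` V2)"
  let ?P = "metric_projection (T2 ` V2)"
  have C: "compact (T2 ` V2)" "T2 ` V2 \<noteq> {}" "convex (T2 ` V2)"
    using assms compact_continuous_image by auto
  have "continuous_on UNIV (the_inv_into V2 T2 \<circ> ?P)"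
  proof (rule continuous_on_compose)
    show "continuous_on UNIV ?P" by (rule continuous_on_metric_projection[OF C])
    show "continuous_on (?P ` UNIV) (the_inv_into V2 T2)"
      using continuous_on_inv_into[of V2 T2] assms metric_projection(1)[OF C]
      by (blast intro: continuous_on_subset)
  qed
  then show "let S = the_inv_into V2 T2 \<circ> ?P
      in continuous_on UNIV S \<and> pseudo_inverse V2 UNIV T2 S \<and>
         (\<forall>S'. pseudo_inverse V2 UNIV T2 S' \<longrightarrow> S' = S)"
    using pseudo_inverse_iff_inv_comp_metric_projection[of V2 T2] assms by (simp add: Let_def)
qed

end
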